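(* Let $(n_i)_{i\ge1}$ be positive integers and let $(k^{(E)}_i)$, $(k^{(F)}_i)$ be sequences of positive integers such that $\lim_{i\to\infty}\prod_{j\ge0}\frac{n_{i+j}}{n_{i+j}+k^{(E)}_{i+j}}=1$, $\lim_{i\to\infty}\prod_{j\ge0}\frac{n_{i+j}}{n_{i+j}+k^{(F)}_{i+j}}=1$, $\prod_{i\ge1}(n_i+k^{(E)}_i)=\prod_{i\ge1}(n_i+k^{(F)}_i)$ as supernatural numbers, and $\lim_{i\to\infty}\frac{(n_1+k^{(E)}_1)\cdots(n_i+k^{(E)}_i)}{(n_1+k^{(F)}_1)\cdots(n_i+k^{(F)}_i)}=1$. Then $(k^{(E)}_i)$ and $(k^{(F)}_i)$ are sufficiently close.
   Context: Definition (sufficiently close). Sequences $(k^{(E)}_i)$ and $(k^{(F)}_i)$ (relative to $(n_i)$) are sufficiently close if for every $\delta>0$ and every $N$: (i) there exist $i_1>i'_1\ge N$ such that $1-\prod_{j\ge0}\frac{n_{i'_1+j}}{n_{i'_1+j}+k^{(E)}_{i'_1+j}}<\delta$, $\prod_{i=1}^{i'_1-1}(n_i+k^{(E)}_i)$ divides $\prod_{i=1}^{i_1-1}(n_i+k^{(F)}_i)$, and $$\frac{(n_1+k^{(F)}_1)\cdots(n_{i'_1-1}+k^{(F)}_{i'_1-1})}{(n_1+k^{(E)}_1)\cdots(n_{i'_1-1}+k^{(E)}_{i'_1-1})}\cdot\frac{(n_{i'_1}+k^{(F)}_{i'_1})\cdots(n_{i_1-1}+k^{(F)}_{i_1-1})}{n_{i'_1}\cdots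 n_{i_1-1}}>1;$$ and (ii) the same holds with the roles of $E$ and $F$ interchanged (for some $i_2>i'_2\ge N$). *)

theory Defs
  imports Complex_Main "HOL-Computational_Algebra.Primes" "HOL-Library.Extended_Nat"
begin

text \<open>Tail infinite product  prod_{j>=0} n_(i+j) / (n_(i+j) + k_(i+j)), taken as the
  limit of the partial products (these are decreasing and positive, so the limit exists,
  possibly 0).\<close>
definition tailprod :: "(nat \<Rightarrow> nat) \<Rightarrow> (nat \<Rightarrow> nat) \<Rightarrow> nat \<Rightarrow> real" where
  "tailprod n k i = lim (\<lambda>m. \<Prod>j<m. real (n (i+j)) / real (n (i+j) + k (i+j)))"

text \<open>Exponent of the prime p in the supernatural number prod_{i>=1} a_i.\<close>
definition supnat_exp :: "(nat \<Rightarrow> nat) \<Rightarrow> nat \<Rightarrow> enat" where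
  "supnat_exp a p = (SUP N. enat (\<Sum>i\<in>{1..N}. multiplicity p (a i)))"

definition supnat_eq :: "(nat \<Rightarrow> nat) \<Rightarrow> (nat \<Rightarrow> nat) \<Rightarrow> bool" where
  "supnat_eq a b \<longleftrightarrow> (\<forall>p. prime p \<longrightarrow> supnat_exp a p = supnat_exp b p)"

definition suff_close_half :: "(nat \<Rightarrow> nat) \<Rightarrow> (nat \<Rightarrow> nat) \<Rightarrow> (nat \<Rightarrow> nat) \<Rightarrow> bool" where
  "suff_close_half n kE kF \<longleftrightarrow>
     (\<forall>\<delta>>0. \<forall>N\<ge>1. \<exists>i1 i1'. i1 > i1' \<and> i1' \<ge> N \<and>
        1 - tailprod n kE i1' < \<delta> \<and>
        (\<Prod>i\<in>{1..<i1'}. n i + kE i) dvd (\<Prod>i\<in>{1..<i1}. n i + kF i) \<and>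
        (\<Prod>i\<in>{1..<i1'}. real (n i + kF i)) / (\<Prod>i\<in>{1..<i1'}. real (n i + kE i)) *
        ((\<Prod>i\<in>{i1'..<i1}. real (n i + kF i)) / (\<Prod>i\<in>{i1'..<i1}. real (n i))) > 1)"

definition sufficiently_close :: "(nat \<Rightarrow> nat) \<Rightarrow> (nat \<Rightarrow> nat) \<Rightarrow> (nat \<Rightarrow> nat) \<Rightarrow> bool" where
  "sufficiently_close n kE kF \<longleftrightarrow> suff_close_half n kE kF \<and> suff_close_half n kF kE"

end

theory Submission
  imports Defs
begin

text \<open>Fix a large index i'. Equality of the supernatural numbers makes the E-product up to i'
  divide the F-product up to any sufficiently large M, and the convergence of the ratio of
  partial products to 1 makes this F/E ratio up to M exceed n i' / (n i' + kE i'). Splitting the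
  F-product at i' and cancelling turns the latter into the required inequality, because the tail
  product of the factors (n i + kE i) / n i \<ge> 1 is at least its first factor.\<close>

lemma enat_le_SUP_enat_imp_le:
  fixes f :: "'a \<Rightarrow> nat"
  assumes "enat s \<le> (SUP x. enat (f x))"
  shows "\<exists>x. s \<le> f x"
proof (cases s)
  case (Suc t)
  then have "enat t < (SUP x. enat (f x))"
    using assms by (simp add: Suc_ile_eq)
  then obtain x where "enat t < enat (f x)"
    by (auto simp: less_SUP_iff)
  with Suc have "s \<le> f x"
    by simp
  then show ?thesis ..
qed simp

lemma eventually_dvd_if_eventually_multiplicity_le:
  fixes x :: "'a :: factorial_semiring"
  assumes "x \<noteq> 0"
    and "\<And>p. prime p \<Longrightarrow> eventually (\<lambda>M. multiplicity p x \<le> multiplicity p (y M)) F"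
  shows "eventually (\<lambda>M. x dvd y M) F"
proof -
  have "eventually (\<lambda>M. \<forall>p\<in>prime_factors x. multiplicity p x \<le> multiplicity p (y M)) F"
    by (intro eventually_ball_finite ballI assms(2)) (simp_all add: in_prime_factors_iff)
  then show ?thesis
  proof (rule eventually_mono)
    fix M assume le: "\<forall>p\<in>prime_factors x. multiplicity p x \<le> multiplicity p (y M)"
    show "x dvd y M"
    proof (rule multiplicity_le_imp_dvd[OF \<open>x \<noteq> 0\<close>])
      fix p :: 'a assume "prime p"
      then show "multiplicity p x \<le> multiplicity p (y M)"
        using le by (cases "p \<in> prime_factors x") (auto simp: prime_factors_multiplicity)
    qed
  qed
qed

lemma multiplicity_partial_prod:
  fixes a :: "nat \<Rightarrow> nat"
  assumes "\<forall>i\<ge>1. a i > 0" and "prime p"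
  shows "multiplicity p (\<Prod>i\<in>{1..N}. a i) = (\<Sum>i\<in>{1..N}. multiplicity p (a i))"
proof -
  have "0 \<notin> a ` {1..N}"
    using assms(1) by force
  then show ?thesis
    using assms(2) by (simp add: prime_elem_multiplicity_prod_distrib)
qed

lemma supnat_exp_eq_SUP_multiplicity:
  assumes "\<forall>i\<ge>1. a i > 0" and "prime p"
  shows "supnat_exp a p = (SUP N. enat (multiplicity p (\<Prod>i\<in>{1..N}. a i)))"
  unfolding supnat_exp_def multiplicity_partial_prod[OF assms] ..

lemma eventually_partial_prod_dvd:
  assumes pos_a: "\<forall>i\<ge>1. a i > 0" and pos_b: "\<forall>i\<ge>1. b i > 0" and "supnat_eq a b"
  shows "eventually (\<lambda>M. (\<Prod>i\<in>{1..m}. a i) dvd (\<Prod>i\<in>{1..M}. b i)) sequentially"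
proof (rule eventually_dvd_if_eventually_multiplicity_le)
  show "(\<Prod>i\<in>{1..m}. a i) \<noteq> 0"
    using pos_a by auto
next
  fix p :: nat assume p: "prime p"
  have "enat (multiplicity p (\<Prod>i\<in>{1..m}. a i)) \<le> supnat_exp a p"
    unfolding supnat_exp_eq_SUP_multiplicity[OF pos_a p] by (rule SUP_upper) simp
  also have "\<dots> = (SUP N. enat (multiplicity p (\<Prod>i\<in>{1..N}. b i)))"
    using \<open>supnat_eq a b\<close> p by (simp add: supnat_eq_def supnat_exp_eq_SUP_multiplicity[OF pos_b])
  finally obtain N where N: "multiplicity p (\<Prod>i\<in>{1..m}. a i) \<le> multiplicity p (\<Prod>i\<in>{1..N}. b i)"
    by (metis enat_le_SUP_enat_imp_le)
  show "eventually (\<lambda>M. multiplicity p (\<Prod>i\<in>{1..m}. a i) \<le> multiplicity p (\<Prod>i\<in>{1..M}. b i))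
      sequentially"
    unfolding eventually_sequentially
  proof (intro exI allI impI)
    fix M assume "N \<le> M"
    then have "multiplicity p (\<Prod>i\<in>{1..N}. b i) \<le> multiplicity p (\<Prod>i\<in>{1..M}. b i)"
      using pos_b by (intro dvd_imp_multiplicity_le prod_dvd_prod_subset) auto
    with N show "multiplicity p (\<Prod>i\<in>{1..m}. a i) \<le> multiplicity p (\<Prod>i\<in>{1..M}. b i)"
      by linarith
  qed
qed

lemma prod_ratio_ge_first_factor:
  fixes e n :: "nat \<Rightarrow> real"
  assumes "\<forall>i\<ge>j. 0 < n i \<and> n i \<le> e i" and "j < m"
  shows "e j / n j \<le> (\<Prod>i\<in>{j..<m}. e i) / (\<Prod>i\<in>{j..<m}. n i)"
proof -
  have "e j / n j = e j / n j * 1" by simp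
  also have "\<dots> \<le> e j / n j * (\<Prod>i\<in>{Suc j..<m}. e i / n i)"
    using assms(1) by (intro mult_left_mono prod_ge_1) (auto intro: divide_nonneg_pos)
  also have "\<dots> = (\<Prod>i\<in>{j..<m}. e i / n i)"
    using \<open>j < m\<close> by (simp add: prod.atLeast_Suc_lessThan)
  finally show ?thesis
    by (simp add: prod_dividef)
qed

lemma split_prod_ratio_gt_one:
  fixes e f n :: "nat \<Rightarrow> real"
  assumes pos: "\<forall>i\<ge>j. 0 < n i \<and> n i \<le> e i" and "l \<le> j" "j < m"
    and gt: "(\<Prod>i\<in>{l..<m}. f i) / (\<Prod>i\<in>{l..<m}. e i) * (e j / n j) > 1"
  shows "(\<Prod>i\<in>{l..<j}. f i) / (\<Prod>i\<in>{l..<j}. e i) *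
    ((\<Prod>i\<in>{j..<m}. f i) / (\<Prod>i\<in>{j..<m}. n i)) > 1"
proof -
  define R where "R = (\<Prod>i\<in>{l..<m}. f i) / (\<Prod>i\<in>{l..<m}. e i)"
  have "e j / n j > 0"
    using pos by (auto dest: order.strict_trans2)
  moreover have "0 < R * (e j / n j)"
    using gt unfolding R_def by linarith
  ultimately have "R > 0"
    by (rule zero_less_mult_pos2[rotated])
  have "1 < R * (e j / n j)"
    using gt unfolding R_def .
  also have "\<dots> \<le> R * ((\<Prod>i\<in>{j..<m}. e i) / (\<Prod>i\<in>{j..<m}. n i))"
    using \<open>R > 0\<close> pos \<open>j < m\<close> by (intro mult_left_mono prod_ratio_ge_first_factor) auto
  also have "\<dots> = (\<Prod>i\<in>{l..<j}. f i) / (\<Prod>i\<in>{l..<j}. e i) *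
      ((\<Prod>i\<in>{j..<m}. f i) / (\<Prod>i\<in>{j..<m}. n i))"
  proof -
    have split: "(\<Prod>i\<in>{l..<m}. g i) = (\<Prod>i\<in>{l..<j}. g i) * (\<Prod>i\<in>{j..<m}. g i)"
      for g :: "nat \<Rightarrow> real"
      using \<open>l \<le> j\<close> \<open>j < m\<close> by (simp add: prod.atLeastLessThan_concat)
    have cancel: "F1 * F2 / (E1 * E2) * (E2 / N2) = F1 / E1 * (F2 / N2)" if "E2 \<noteq> 0"
      for F1 F2 E1 E2 N2 :: real
      using that by (cases "E1 = 0"; cases "N2 = 0") (simp_all add: field_simps)
    have "(\<Prod>i\<in>{j..<m}. e i) > 0"
      using pos by (intro prod_pos) (auto dest: order.strict_trans2)
    then show ?thesis
      unfolding R_def split[of f] split[of e] by (intro cancel) linarith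
  qed
  finally show ?thesis .
qed

lemma suff_close_half_if_ratio_tendsto_1:
  fixes n kE kF :: "nat \<Rightarrow> nat"
  assumes pos: "\<forall>i\<ge>1. n i > 0" and kE_pos: "\<forall>i\<ge>1. kE i > 0"
    and tail: "(\<lambda>i. tailprod n kE i) \<longlonglongrightarrow> 1"
    and supnat: "supnat_eq (\<lambda>i. n i + kE i) (\<lambda>i. n i + kF i)"
    and ratio: "(\<lambda>i. (\<Prod>j\<in>{1..i}. real (n j + kF j)) / (\<Prod>j\<in>{1..i}. real (n j + kE j))) \<longlonglongrightarrow> 1"
  shows "suff_close_half n kE kF"
  unfolding suff_close_half_def
proof (intro allI impI)
  fix \<delta> :: real and N :: nat
  assume "\<delta> > 0" and "N \<ge> 1"
  have "eventually (\<lambda>j. N \<le> j \<and> 1 - \<delta> < tailprod n kE j) sequentially"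
    using \<open>\<delta> > 0\<close> by (intro eventually_conj eventually_ge_at_top order_tendstoD(1)[OF tail]) simp
  then obtain j where "j \<ge> N" and tail_j: "1 - tailprod n kE j < \<delta>"
    using eventually_happens'[OF sequentially_bot] by force
  define c where "c = real (n j + kE j) / real (n j)"
  have "j \<ge> 1" using \<open>j \<ge> N\<close> \<open>N \<ge> 1\<close> by simp
  then have "c > 1" unfolding c_def using pos kE_pos by simp
  then have ev_ratio: "eventually (\<lambda>M. 1 / c < (\<Prod>i\<in>{1..M}. real (n i + kF i)) /
      (\<Prod>i\<in>{1..M}. real (n i + kE i))) sequentially"
    by (intro order_tendstoD(1)[OF ratio]) simp
  have ev_dvd: "eventually (\<lambda>M. (\<Prod>i\<in>{1..j - 1}. n i + kE i) dvd (\<Prod>i\<in>{1..M}. n i + kF i))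
      sequentially"
    using pos by (intro eventually_partial_prod_dvd supnat) auto
  have "eventually (\<lambda>M. j \<le> M \<and>
      1 / c < (\<Prod>i\<in>{1..M}. real (n i + kF i)) / (\<Prod>i\<in>{1..M}. real (n i + kE i)) \<and>
      (\<Prod>i\<in>{1..j - 1}. n i + kE i) dvd (\<Prod>i\<in>{1..M}. n i + kF i)) sequentially"
    by (intro eventually_conj eventually_ge_at_top ev_ratio ev_dvd)
  then obtain M where "j \<le> M"
    and M_ratio: "1 / c < (\<Prod>i\<in>{1..M}. real (n i + kF i)) / (\<Prod>i\<in>{1..M}. real (n i + kE i))"
    and M_dvd: "(\<Prod>i\<in>{1..j - 1}. n i + kE i) dvd (\<Prod>i\<in>{1..M}. n i + kF i)"
    using eventually_happens'[OF sequentially_bot] by blast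
  have intervals: "{1..<j} = {1..j - 1}" "{1..<Suc M} = {1..M}"
    using \<open>j \<ge> 1\<close> by auto
  have "(\<Prod>i\<in>{1..<Suc M}. real (n i + kF i)) / (\<Prod>i\<in>{1..<Suc M}. real (n i + kE i)) * c > 1"
    using M_ratio \<open>c > 1\<close> unfolding intervals by (simp add: field_simps)
  then have "(\<Prod>i\<in>{1..<j}. real (n i + kF i)) / (\<Prod>i\<in>{1..<j}. real (n i + kE i)) *
      ((\<Prod>i\<in>{j..<Suc M}. real (n i + kF i)) / (\<Prod>i\<in>{j..<Suc M}. real (n i))) > 1"
    using pos \<open>j \<ge> 1\<close> \<open>j \<le> M\<close> unfolding c_def
    by (intro split_prod_ratio_gt_one) auto
  moreover have "(\<Prod>i\<in>{1..<j}. n i + kE i) dvd (\<Prod>i\<in>{1..<Suc M}. n i + kF i)"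
    using M_dvd unfolding intervals .
  moreover have "j < Suc M"
    using \<open>j \<le> M\<close> by simp
  ultimately show "\<exists>i1 i1'. i1 > i1' \<and> i1' \<ge> N \<and>
      1 - tailprod n kE i1' < \<delta> \<and>
      (\<Prod>i\<in>{1..<i1'}. n i + kE i) dvd (\<Prod>i\<in>{1..<i1}. n i + kF i) \<and>
      (\<Prod>i\<in>{1..<i1'}. real (n i + kF i)) / (\<Prod>i\<in>{1..<i1'}. real (n i + kE i)) *
      ((\<Prod>i\<in>{i1'..<i1}. real (n i + kF i)) / (\<Prod>i\<in>{i1'..<i1}. real (n i))) > 1"
    using \<open>j \<ge> N\<close> tail_j by blast
qed

theorem lemma4p8:
  fixes n kE kF :: "nat \<Rightarrow> nat"
  assumes "\<forall>i\<ge>1. n i > 0" and "\<forall>i\<ge>1. kE i > 0" and "\<forall>i\<ge>1. kF i > 0"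
    and "(\<lambda>i. tailprod n kE i) \<longlonglongrightarrow> 1"
    and "(\<lambda>i. tailprod n kF i) \<longlonglongrightarrow> 1"
    and "supnat_eq (\<lambda>i. n i + kE i) (\<lambda>i. n i + kF i)"
    and "(\<lambda>i. (\<Prod>j\<in>{1..i}. real (n j + kE j)) / (\<Prod>j\<in>{1..i}. real (n j + kF j))) \<longlonglongrightarrow> 1"
  shows "sufficiently_close n kE kF"
proof -
  have "(\<lambda>i. (\<Prod>j\<in>{1..i}. real (n j + kF j)) / (\<Prod>j\<in>{1..i}. real (n j + kE j))) \<longlonglongrightarrow> 1"
    using tendsto_inverse[OF assms(7)] by (simp add: inverse_divide)
  moreover have "supnat_eq (\<lambda>i. n i + kF i) (\<lambda>i. n i + kE i)"
    using assms(6) unfolding supnat_eq_def by metis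
  ultimately show ?thesis
    unfolding sufficiently_close_def
    using suff_close_half_if_ratio_tendsto_1 assms by blast
qed

end
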